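(* Let $V$ be a finite set and let $\Pi=\{\mathcal{P}_1,\mathcal{P}_2,\mathcal{P}_3\}$ be a homogeneous $3$-scheme on $V$. Then $(V,\mathcal{P}_2\cup\{1\})$ is an association scheme, where $1=\{(v,v)\mid v\in V\}$ is the identity relation.
   Context: For a finite set $V$ and $s\geq1$, let $V^{(s)}$ be the set of $s$-tuples of pairwise distinct elements of $V$. For $s>1$ and $1\leq i\leq s$, $\pi^s_i:V^{(s)}\to V^{(s-1)}$ deletes the $i$-th coordinate. $\mathrm{Symm}_s$ acts on $V^{(s)}$ by $(v_1,\dots,v_s)^\tau=(v_{1^\tau},\dots,v_{s^\tau})$. An $m$-collection on $V$ is a set $\Pi=\{\mathcal{P}_1,\dots,\mathcal{P}_m\}$ where $\mathcal{P}_s$ is a partition of $V^{(s)}$; its classes are called colors. It is an $m$-scheme if for every $1<s\leq m$: (compatibility) whenever $\bar u,\bar v$ lie in the same color of $\mathcal{P}_s$, for every $i$ the tuples $\pi^s_i(\bar u),\pi^s_i(\bar v)$ lie in the same color of $\mathcal{P}_{s-1}$; (regularity) whenever $\bar u,\bar v$ lie in the same color of $\mathcal{P}_{s-1}$, for every $1\leq i\leq s$ and every $P\in\mathcal{P}_s$, $\#\{\bar u'\in P\mid \pi^s_i(\bar u')=\bar u\}=\#\{\bar v'\in P\mid\pi^s_i(\bar v')=\bar v\}$; (invariance) for every $P\in\mathcal{P}_s$ and $\tau\in\mathrm{Symm}_s$, $P^\tau:=\{\bar v^\tau\mid \bar v\in P\}\in\mathcal{P}_s$. It is homogeneous if $|\mathcal{P}_1|=1$.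 An association scheme is a pair $(X,G)$ with $X$ finite and $G$ a partition of $X\times X$ containing the identity relation $1$, closed under $g\mapsto g^*:=\{(y,x)\mid(x,y)\in g\}$, and such that for all $f,g,h\in G$ the number $\#\{\gamma\in X\mid(\alpha,\gamma)\in f,(\gamma,\beta)\in g\}$ is the same for all $(\alpha,\beta)\in h$. *)

theory Defs
  imports "HOL-Library.Disjoint_Sets" "HOL-Combinatorics.Permutations"
begin

text \<open>s-tuples of pairwise distinct elements of V, represented as distinct lists of length s.
  Coordinates are indexed from 0.\<close>
definition tuples :: "'a set \<Rightarrow> nat \<Rightarrow> 'a list set" where
  "tuples V s = {xs. length xs = s \<and> distinct xs \<and> set xs \<subseteq> V}"

definition proj :: "nat \<Rightarrow> 'a list \<Rightarrow> 'a list" where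
  "proj i xs = take i xs @ drop (Suc i) xs"

definition tuple_act :: "'a list \<Rightarrow> (nat \<Rightarrow> nat) \<Rightarrow> 'a list" where
  "tuple_act xs \<tau> = map (\<lambda>j. xs ! \<tau> j) [0..<length xs]"

definition m_collection :: "'a set \<Rightarrow> nat \<Rightarrow> (nat \<Rightarrow> 'a list set set) \<Rightarrow> bool" where
  "m_collection V m P \<longleftrightarrow> (\<forall>s. 1 \<le> s \<and> s \<le> m \<longrightarrow> partition_on (tuples V s) (P s))"

definition same_color :: "'a list set set \<Rightarrow> 'a list \<Rightarrow> 'a list \<Rightarrow> bool" where
  "same_color Q u v \<longleftrightarrow> (\<exists>C\<in>Q. u \<in> C \<and> v \<in> C)"

definition m_scheme :: "'a set \<Rightarrow> nat \<Rightarrow> (nat \<Rightarrow> 'a list set set) \<Rightarrow> bool" where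
  "m_scheme V m P \<longleftrightarrow> m_collection V m P \<and>
     (\<forall>s. 1 < s \<and> s \<le> m \<longrightarrow>
        \<comment> \<open>compatibility\<close>
        (\<forall>u v i. same_color (P s) u v \<and> i < s \<longrightarrow>
            same_color (P (s - 1)) (proj i u) (proj i v)) \<and>
        \<comment> \<open>regularity\<close>
        (\<forall>u v i C. same_color (P (s - 1)) u v \<and> i < s \<and> C \<in> P s \<longrightarrow>
            card {u' \<in> C. proj i u' = u} = card {v' \<in> C. proj i v' = v}) \<and>
        \<comment> \<open>invariance\<close>
        (\<forall>C \<tau>. C \<in> P s \<and> \<tau> permutes {..<s} \<longrightarrow>
            (\<lambda>xs. tuple_act xs \<tau>) ` C \<in> P s))"

definition homogeneous :: "(nat \<Rightarrow> 'a list set set) \<Rightarrow> bool" where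
  "homogeneous P \<longleftrightarrow> card (P 1) = 1"

definition association_scheme :: "'a set \<Rightarrow> ('a \<times> 'a) set set \<Rightarrow> bool" where
  "association_scheme X G \<longleftrightarrow> finite X \<and> partition_on (X \<times> X) G \<and> Id_on X \<in> G \<and>
     (\<forall>g\<in>G. g\<inverse> \<in> G) \<and>
     (\<forall>f\<in>G. \<forall>g\<in>G. \<forall>h\<in>G. \<forall>a b a' b'. (a, b) \<in> h \<and> (a', b') \<in> h \<longrightarrow>
        card {c\<in>X. (a, c) \<in> f \<and> (c, b) \<in> g} = card {c\<in>X. (a', c) \<in> f \<and> (c, b') \<in> g})"

definition as_relation :: "'a list set \<Rightarrow> ('a \<times> 'a) set" where
  "as_relation C = (\<lambda>xs. (xs ! 0, xs ! 1)) ` C"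

end

theory Submission
  imports Defs
begin

text \<open>The colours of \<open>\<P>\<^sub>2\<close>, read as relations, partition the off-diagonal part of \<open>V \<times> V\<close>,
  and invariance under the transposition of the two coordinates makes this partition closed
  under converse. For the intersection numbers only the case of two colours \<open>f\<close>, \<open>g\<close> needs work.
  Over the diagonal, the walks \<open>a \<rightarrow> c \<rightarrow> a\<close> are counted by the out-valency of \<open>f\<close> (or there
  are none), and by homogeneity the regularity of \<open>\<P>\<^sub>2\<close> makes this valency constant. Over a colour
  \<open>h\<close>, the triples \<open>(a, c, b)\<close> with \<open>(a, c) \<in> f\<close> and \<open>(c, b) \<in> g\<close> form, by compatibility, a union
  of colours of \<open>\<P>\<^sub>3\<close>; the number of them lying over \<open>(a, b)\<close> then depends only on the colour of
  \<open>(a, b)\<close>, by the regularity of \<open>\<P>\<^sub>3\<close>.\<close>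

lemma partition_on_class_eq:
  "partition_on A Q \<Longrightarrow> C \<in> Q \<Longrightarrow> C' \<in> Q \<Longrightarrow> x \<in> C \<Longrightarrow> x \<in> C' \<Longrightarrow> C = C'"
  using partition_onD2 disjointD by blast

lemma partition_on_mem_iff:
  "partition_on A Q \<Longrightarrow> C \<in> Q \<Longrightarrow> C' \<in> Q \<Longrightarrow> x \<in> C' \<Longrightarrow> x \<in> C \<longleftrightarrow> C = C'"
  using partition_on_class_eq by metis

lemma same_color_class:
  "partition_on A Q \<Longrightarrow> same_color Q u v \<Longrightarrow> C \<in> Q \<Longrightarrow> u \<in> C \<Longrightarrow> v \<in> C"
  unfolding same_color_def using partition_on_class_eq by metis

lemma same_color_mem:
  "partition_on A Q \<Longrightarrow> same_color Q u v \<Longrightarrow> u \<in> A \<and> v \<in> A"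
  unfolding same_color_def using partition_onD1 by blast

lemma Union_saturated_classes:
  assumes "partition_on A Q" "T \<subseteq> A" "\<And>t t'. same_color Q t t' \<Longrightarrow> t \<in> T \<Longrightarrow> t' \<in> T"
  shows "\<Union>{C \<in> Q. C \<subseteq> T} = T"
proof
  show "T \<subseteq> \<Union>{C \<in> Q. C \<subseteq> T}"
  proof
    fix t assume "t \<in> T"
    then obtain C where "C \<in> Q" "t \<in> C"
      using assms(1,2) partition_onD1 by blast
    with assms(3) \<open>t \<in> T\<close> have "C \<subseteq> T" by (auto simp: same_color_def)
    with \<open>C \<in> Q\<close> \<open>t \<in> C\<close> show "t \<in> \<Union>{C \<in> Q. C \<subseteq> T}" by blast
  qed
qed blast

lemma tuples_2_iff: "xs \<in> tuples V 2 \<longleftrightarrow> (\<exists>x y. xs = [x, y] \<and> x \<noteq> y \<and> x \<in> V \<and> y \<in> V)"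
  by (auto simp: tuples_def numeral_eq_Suc length_Suc_conv)

lemma tuples_2E:
  assumes "xs \<in> tuples V 2"
  obtains x y where "xs = [x, y]" "x \<noteq> y" "x \<in> V" "y \<in> V"
  using assms by (auto simp: tuples_2_iff)

lemma tuples_3_iff:
  "xs \<in> tuples V 3 \<longleftrightarrow> (\<exists>x y z. xs = [x, y, z] \<and> distinct [x, y, z] \<and> x \<in> V \<and> y \<in> V \<and> z \<in> V)"
  by (auto simp: tuples_def numeral_eq_Suc length_Suc_conv)

lemma finite_tuples: "finite V \<Longrightarrow> finite (tuples V s)"
  by (rule finite_subset[OF _ finite_lists_length_eq[of V s]]) (auto simp: tuples_def)

lemma proj_0_Cons [simp]: "proj 0 (x # xs) = xs"
  by (simp add: proj_def)

lemma proj_Suc_Cons [simp]: "proj (Suc i) (x # xs) = x # proj i xs"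
  by (simp add: proj_def)

lemma proj_2_triple [simp]: "proj 2 [x, c, y] = [x, c]"
  by (simp add: proj_def numeral_eq_Suc)

lemma tuple_act_transpose_pair: "tuple_act [x, y] (Transposition.transpose 0 1) = [y, x]"
  by (simp add: tuple_act_def upt_rec)

lemma as_relation_iff:
  assumes "C \<subseteq> tuples V 2"
  shows "(x, y) \<in> as_relation C \<longleftrightarrow> [x, y] \<in> C"
proof
  assume "(x, y) \<in> as_relation C"
  then obtain xs where "xs \<in> C" "xs ! 0 = x" "xs ! 1 = y"
    by (auto simp: as_relation_def)
  moreover from assms \<open>xs \<in> C\<close> obtain p q where "xs = [p, q]"
    by (blast elim: tuples_2E)
  ultimately show "[x, y] \<in> C" by simp
next
  assume "[x, y] \<in> C"
  then show "(x, y) \<in> as_relation C"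
    unfolding as_relation_def by (rule rev_image_eqI) simp
qed

lemma as_relation_transpose:
  assumes "C \<subseteq> tuples V 2"
  shows "as_relation ((\<lambda>xs. tuple_act xs (Transposition.transpose 0 1)) ` C) = (as_relation C)\<inverse>"
proof -
  have swapped: "(tuple_act xs (Transposition.transpose 0 1) ! 0, tuple_act xs (Transposition.transpose 0 1) ! 1)
      = prod.swap (xs ! 0, xs ! 1)" if "xs \<in> C" for xs
  proof -
    from assms that obtain x y where "xs = [x, y]"
      by (blast elim: tuples_2E)
    then show ?thesis using tuple_act_transpose_pair[of x y] by simp
  qed
  have "as_relation ((\<lambda>xs. tuple_act xs (Transposition.transpose 0 1)) ` C) = prod.swap ` as_relation C"
    unfolding as_relation_def image_image by (rule image_cong) (use swapped in simp_all)
  also have "\<dots> = (as_relation C)\<inverse>"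
  proof (rule set_eqI)
    fix p :: "'a \<times> 'a"
    show "p \<in> prod.swap ` as_relation C \<longleftrightarrow> p \<in> (as_relation C)\<inverse>"
      by (cases p) simp
  qed
  finally show ?thesis .
qed

lemma pair_tuples_2: "(\<lambda>xs. (xs ! 0, xs ! 1)) ` tuples V 2 = V \<times> V - Id_on V"
proof
  show "(\<lambda>xs. (xs ! 0, xs ! 1)) ` tuples V 2 \<subseteq> V \<times> V - Id_on V"
    by (auto elim!: tuples_2E)
  show "V \<times> V - Id_on V \<subseteq> (\<lambda>xs. (xs ! 0, xs ! 1)) ` tuples V 2"
  proof clarify
    fix x y assume "x \<in> V" "y \<in> V" "(x, y) \<notin> Id_on V"
    then have "[x, y] \<in> tuples V 2" by (auto simp: tuples_def)
    then show "(x, y) \<in> (\<lambda>xs. (xs ! 0, xs ! 1)) ` tuples V 2"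
      by (rule rev_image_eqI) simp
  qed
qed

lemma partition_on_as_relation:
  assumes part: "partition_on (tuples V 2) Q" and "V \<noteq> {}"
  shows "partition_on (V \<times> V) (as_relation ` Q \<union> {Id_on V})"
proof -
  let ?pair = "\<lambda>xs. (xs ! 0, xs ! 1)"
  have inj: "inj_on ?pair (tuples V 2)"
    by (rule inj_onI) (auto elim!: tuples_2E)
  have classes: "(`) ?pair ` Q - {{}} = as_relation ` Q"
    using partition_onD3[OF part] by (auto simp: as_relation_def)
  have "partition_on (V \<times> V - Id_on V) (as_relation ` Q)"
    using partition_on_inj_image[OF part inj] unfolding pair_tuples_2 classes .
  moreover have "disjnt (Id_on V) (\<Union>(as_relation ` Q))"
    using partition_onD1[OF part] pair_tuples_2[of V] unfolding as_relation_def disjnt_def by blast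
  moreover have "Id_on V \<subseteq> V \<times> V" "Id_on V \<noteq> {}"
    using \<open>V \<noteq> {}\<close> by auto
  ultimately show ?thesis
    by (simp add: partition_on_insert)
qed

lemma card_Id_left:
  assumes "partition_on (V \<times> V) G" "g \<in> G" "h \<in> G" "(a, b) \<in> h"
  shows "card {c \<in> V. (a, c) \<in> Id_on V \<and> (c, b) \<in> g} = (if g = h then 1 else 0)"
proof -
  have "a \<in> V"
    using assms partition_onD1 by blast
  with partition_on_mem_iff[OF assms] have "{c \<in> V. (a, c) \<in> Id_on V \<and> (c, b) \<in> g} = (if g = h then {a} else {})"
    by auto
  then show ?thesis
    by simp
qed

lemma card_Id_right:
  assumes "partition_on (V \<times> V) G" "f \<in> G" "h \<in> G" "(a, b) \<in> h"
  shows "card {c \<in> V. (a, c) \<in> f \<and> (c, b) \<in> Id_on V} = (if f = h then 1 else 0)"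
proof -
  have "b \<in> V"
    using assms partition_onD1 by blast
  with partition_on_mem_iff[OF assms] have "{c \<in> V. (a, c) \<in> f \<and> (c, b) \<in> Id_on V} = (if f = h then {b} else {})"
    by auto
  then show ?thesis
    by simp
qed

lemma closed_walks_eq:
  assumes "partition_on (V \<times> V) G" "f \<in> G" "f\<inverse> \<in> G" "g \<in> G"
  shows "{c \<in> V. (a, c) \<in> f \<and> (c, a) \<in> g} = (if g = f\<inverse> then {c \<in> V. (a, c) \<in> f} else {})"
  using partition_on_mem_iff[OF assms(1,4,3)] by auto

lemma m_scheme_partition:
  "m_scheme V m P \<Longrightarrow> 1 \<le> s \<Longrightarrow> s \<le> m \<Longrightarrow> partition_on (tuples V s) (P s)"
  by (simp add: m_scheme_def m_collection_def)

lemma m_scheme_color_subset: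
  "m_scheme V m P \<Longrightarrow> 1 \<le> s \<Longrightarrow> s \<le> m \<Longrightarrow> C \<in> P s \<Longrightarrow> C \<subseteq> tuples V s"
  using m_scheme_partition partition_onD1 by blast

lemma m_scheme_compatible:
  "m_scheme V m P \<Longrightarrow> 1 < s \<Longrightarrow> s \<le> m \<Longrightarrow> same_color (P s) u v \<Longrightarrow> i < s \<Longrightarrow>
    same_color (P (s - 1)) (proj i u) (proj i v)"
  unfolding m_scheme_def by blast

lemma m_scheme_regular:
  "m_scheme V m P \<Longrightarrow> 1 < s \<Longrightarrow> s \<le> m \<Longrightarrow> same_color (P (s - 1)) u v \<Longrightarrow> i < s \<Longrightarrow>
    C \<in> P s \<Longrightarrow> card {u' \<in> C. proj i u' = u} = card {v' \<in> C. proj i v' = v}"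
  unfolding m_scheme_def by blast

lemma m_scheme_invariant:
  "m_scheme V m P \<Longrightarrow> 1 < s \<Longrightarrow> s \<le> m \<Longrightarrow> C \<in> P s \<Longrightarrow> \<tau> permutes {..<s} \<Longrightarrow>
    (\<lambda>xs. tuple_act xs \<tau>) ` C \<in> P s"
  unfolding m_scheme_def by blast

lemma m_scheme_converse:
  assumes "m_scheme V m P" "2 \<le> m" "C \<in> P 2"
  shows "(as_relation C)\<inverse> \<in> as_relation ` P 2"
proof -
  have "Transposition.transpose 0 1 permutes {..<2::nat}"
    by (rule permutes_swap_id) auto
  then have "(\<lambda>xs. tuple_act xs (Transposition.transpose 0 1)) ` C \<in> P 2"
    using m_scheme_invariant[OF assms(1) _ assms(2,3)] by simp
  moreover have "C \<subseteq> tuples V 2"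
    using m_scheme_color_subset[OF assms(1) _ assms(2,3)] by simp
  ultimately show ?thesis
    using as_relation_transpose by (metis image_eqI)
qed

lemma homogeneous_same_color:
  assumes "partition_on (tuples V 1) (P 1)" "homogeneous P" "x \<in> V" "y \<in> V"
  shows "same_color (P 1) [x] [y]"
proof -
  obtain X where X: "P 1 = {X}"
    using assms(2) by (auto simp: homogeneous_def card_1_singleton_iff)
  with assms(1) have "X = tuples V 1"
    by (auto simp: partition_on_def)
  with X assms(3,4) show ?thesis
    by (auto simp: same_color_def tuples_def)
qed

lemma homogeneous_nonempty:
  assumes "partition_on (tuples V 1) (P 1)" "homogeneous P"
  shows "V \<noteq> {}"
proof
  assume "V = {}"
  then have "tuples V 1 = {}"
    by (auto simp: tuples_def)
  with assms(1) have "P 1 = {}"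
    by (simp add: partition_on_empty)
  with assms(2) show False
    by (simp add: homogeneous_def)
qed

lemma m_scheme_partition_relations:
  assumes "m_scheme V m P" "2 \<le> m" "homogeneous P"
  shows "partition_on (V \<times> V) (as_relation ` P 2 \<union> {Id_on V})"
proof -
  have "partition_on (tuples V 1) (P 1)" "partition_on (tuples V 2) (P 2)"
    using m_scheme_partition[OF assms(1)] assms(2) by simp_all
  then show ?thesis
    using partition_on_as_relation homogeneous_nonempty assms(3) by blast
qed

lemma card_successors_eq_fibre:
  assumes "C \<subseteq> tuples V 2"
  shows "card {c \<in> V. [x, c] \<in> C} = card {u \<in> C. proj 1 u = [x]}"
proof -
  have "{u \<in> C. proj 1 u = [x]} = (\<lambda>c. [x, c]) ` {c \<in> V. [x, c] \<in> C}"
  proof (intro set_eqI iffI)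
    fix u assume u: "u \<in> {u \<in> C. proj 1 u = [x]}"
    with assms obtain p q where "u = [p, q]" "q \<in> V"
      by (blast elim: tuples_2E)
    with u show "u \<in> (\<lambda>c. [x, c]) ` {c \<in> V. [x, c] \<in> C}"
      by auto
  qed auto
  then show ?thesis
    by (simp add: card_image inj_on_def)
qed

lemma valency_constant:
  assumes "m_scheme V m P" "2 \<le> m" "homogeneous P" "C \<in> P 2" "x \<in> V" "y \<in> V"
  shows "card {c \<in> V. [x, c] \<in> C} = card {c \<in> V. [y, c] \<in> C}"
proof -
  have "partition_on (tuples V 1) (P 1)"
    using m_scheme_partition[OF assms(1), of 1] assms(2) by simp
  then have "same_color (P 1) [x] [y]"
    using assms(3,5,6) by (rule homogeneous_same_color)
  then have "card {u \<in> C. proj 1 u = [x]} = card {u \<in> C. proj 1 u = [y]}"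
    using m_scheme_regular[OF assms(1), of 2 "[x]" "[y]" 1 C] assms by simp
  moreover have "C \<subseteq> tuples V 2"
    using m_scheme_color_subset[OF assms(1) _ assms(2,4)] by simp
  ultimately show ?thesis
    by (simp add: card_successors_eq_fibre)
qed

lemma card_fibre_Union_colors:
  assumes "finite V" "m_scheme V m P" "1 < s" "s \<le> m" "Q \<subseteq> P s"
    and "same_color (P (s - 1)) u v" "i < s"
  shows "card {t \<in> \<Union>Q. proj i t = u} = card {t \<in> \<Union>Q. proj i t = v}"
proof -
  have part: "partition_on (tuples V s) (P s)"
    using m_scheme_partition[OF assms(2)] assms(3,4) by simp
  have "finite Q"
    using finite_elements[OF finite_tuples[OF assms(1)] part] assms(5) finite_subset by blast
  have fibre_sum: "card {t \<in> \<Union>Q. proj i t = w} = (\<Sum>C\<in>Q. card {t \<in> C. proj i t = w})" for w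
  proof -
    have "{t \<in> \<Union>Q. proj i t = w} = (\<Union>C\<in>Q. {t \<in> C. proj i t = w})"
      by blast
    also have "card \<dots> = (\<Sum>C\<in>Q. card {t \<in> C. proj i t = w})"
    proof (rule card_UN_disjoint[OF \<open>finite Q\<close>])
      show "\<forall>C\<in>Q. finite {t \<in> C. proj i t = w}"
      proof
        fix C assume "C \<in> Q"
        then have "{t \<in> C. proj i t = w} \<subseteq> tuples V s"
          using assms(5) partition_onD1[OF part] by blast
        then show "finite {t \<in> C. proj i t = w}"
          using finite_tuples[OF assms(1)] by (rule finite_subset)
      qed
      show "\<forall>C\<in>Q. \<forall>C'\<in>Q. C \<noteq> C' \<longrightarrow> {t \<in> C. proj i t = w} \<inter> {t \<in> C'. proj i t = w} = {}"
        using assms(5) partition_on_class_eq[OF part] by blast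
    qed
    finally show ?thesis .
  qed
  show ?thesis
    unfolding fibre_sum using assms(5) m_scheme_regular[OF assms(2,3,4,6,7)]
    by (intro sum.cong) auto
qed

text \<open>The triple \<open>[x, c, y]\<close> has faces \<open>proj 2 = [x, c]\<close>, \<open>proj 0 = [c, y]\<close> and \<open>proj 1 = [x, y]\<close>.\<close>

lemma card_paths_eq_fibre:
  assumes "F \<subseteq> tuples V 2" "H \<subseteq> tuples V 2" "x \<noteq> y"
  shows "card {c \<in> V. [x, c] \<in> F \<and> [c, y] \<in> H} =
    card {t \<in> tuples V 3. proj 2 t \<in> F \<and> proj 0 t \<in> H \<and> proj 1 t = [x, y]}"
proof -
  have "{t \<in> tuples V 3. proj 2 t \<in> F \<and> proj 0 t \<in> H \<and> proj 1 t = [x, y]}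
      = (\<lambda>c. [x, c, y]) ` {c \<in> V. [x, c] \<in> F \<and> [c, y] \<in> H}"
  proof (intro set_eqI iffI)
    fix t assume t: "t \<in> {t \<in> tuples V 3. proj 2 t \<in> F \<and> proj 0 t \<in> H \<and> proj 1 t = [x, y]}"
    then obtain p q r where "t = [p, q, r]" "q \<in> V"
      by (auto simp: tuples_3_iff)
    with t show "t \<in> (\<lambda>c. [x, c, y]) ` {c \<in> V. [x, c] \<in> F \<and> [c, y] \<in> H}"
      by auto
  next
    fix t assume "t \<in> (\<lambda>c. [x, c, y]) ` {c \<in> V. [x, c] \<in> F \<and> [c, y] \<in> H}"
    then obtain c where c: "t = [x, c, y]" "[x, c] \<in> F" "[c, y] \<in> H"
      by blast
    then have "[x, c] \<in> tuples V 2" "[c, y] \<in> tuples V 2"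
      using assms(1,2) by blast+
    with c assms(3) show "t \<in> {t \<in> tuples V 3. proj 2 t \<in> F \<and> proj 0 t \<in> H \<and> proj 1 t = [x, y]}"
      by (auto simp: tuples_def)
  qed
  then show ?thesis
    by (simp add: card_image inj_on_def)
qed

lemma card_paths_constant:
  assumes "finite V" "m_scheme V m P" "3 \<le> m" "F \<in> P 2" "H \<in> P 2" "same_color (P 2) [a, b] [a', b']"
  shows "card {c \<in> V. [a, c] \<in> F \<and> [c, b] \<in> H} = card {c \<in> V. [a', c] \<in> F \<and> [c, b'] \<in> H}"
proof -
  define T where "T = {t \<in> tuples V 3. proj 2 t \<in> F \<and> proj 0 t \<in> H}"
  have part2: "partition_on (tuples V 2) (P 2)" and part3: "partition_on (tuples V 3) (P 3)"
    using m_scheme_partition[OF assms(2)] assms(3) by simp_all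
  have T_colors: "\<Union>{D \<in> P 3. D \<subseteq> T} = T"
  proof (rule Union_saturated_classes[OF part3])
    show "T \<subseteq> tuples V 3"
      unfolding T_def by blast
    fix t t' assume same: "same_color (P 3) t t'" and "t \<in> T"
    have "same_color (P 2) (proj 2 t) (proj 2 t')" "same_color (P 2) (proj 0 t) (proj 0 t')"
      using m_scheme_compatible[OF assms(2) _ assms(3) same, of 2] m_scheme_compatible[OF assms(2) _ assms(3) same, of 0]
      by simp_all
    moreover have "proj 2 t \<in> F" "proj 0 t \<in> H"
      using \<open>t \<in> T\<close> by (simp_all add: T_def)
    ultimately have "proj 2 t' \<in> F" "proj 0 t' \<in> H"
      using same_color_class[OF part2] assms(4,5) by blast+
    moreover have "t' \<in> tuples V 3"
      using same_color_mem[OF part3 same] by blast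
    ultimately show "t' \<in> T"
      by (simp add: T_def)
  qed
  have F: "F \<subseteq> tuples V 2" and H: "H \<subseteq> tuples V 2"
    using assms(4,5) part2 partition_onD1 by blast+
  have "a \<noteq> b" "a' \<noteq> b'"
    using same_color_mem[OF part2 assms(6)] by (auto simp: tuples_def)
  then have "card {c \<in> V. [a, c] \<in> F \<and> [c, b] \<in> H} = card {t \<in> \<Union>{D \<in> P 3. D \<subseteq> T}. proj 1 t = [a, b]}"
    and "card {c \<in> V. [a', c] \<in> F \<and> [c, b'] \<in> H} = card {t \<in> \<Union>{D \<in> P 3. D \<subseteq> T}. proj 1 t = [a', b']}"
    unfolding T_colors using card_paths_eq_fibre[OF F H] by (simp_all add: T_def conj_assoc)
  with card_fibre_Union_colors[OF assms(1,2) _ assms(3), of "{D \<in> P 3. D \<subseteq> T}"] assms(6) show ?thesis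
    by simp
qed

lemma m_scheme_as_relation_iff:
  assumes "m_scheme V m P" "2 \<le> m" "C \<in> P 2"
  shows "(x, y) \<in> as_relation C \<longleftrightarrow> [x, y] \<in> C"
  using as_relation_iff[OF m_scheme_color_subset[OF assms(1) _ assms(2,3)]] by simp

lemma card_closed_walks_constant:
  assumes "m_scheme V m P" "2 \<le> m" "homogeneous P" "F \<in> P 2" "H \<in> P 2" "a \<in> V" "a' \<in> V"
  shows "card {c \<in> V. (a, c) \<in> as_relation F \<and> (c, a) \<in> as_relation H}
    = card {c \<in> V. (a', c) \<in> as_relation F \<and> (c, a') \<in> as_relation H}"
proof -
  let ?G = "as_relation ` P 2 \<union> {Id_on V}"
  have part: "partition_on (V \<times> V) ?G"
    using m_scheme_partition_relations[OF assms(1-3)] .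
  have "(as_relation F)\<inverse> \<in> ?G"
    using m_scheme_converse[OF assms(1,2,4)] by simp
  then have "card {c \<in> V. (x, c) \<in> as_relation F \<and> (c, x) \<in> as_relation H}
      = (if as_relation H = (as_relation F)\<inverse> then card {c \<in> V. [x, c] \<in> F} else 0)" for x
    using closed_walks_eq[OF part _ _ , of "as_relation F" "as_relation H" x] assms(4,5)
      m_scheme_as_relation_iff[OF assms(1,2,4)] by simp
  then show ?thesis
    using valency_constant[OF assms(1-4,6,7)] by simp
qed

lemma intersection_number_invariant:
  assumes "finite V" "m_scheme V m P" "3 \<le> m" "homogeneous P"
    and G: "G = as_relation ` P 2 \<union> {Id_on V}"
    and "f \<in> G" "g \<in> G" "h \<in> G" "(a, b) \<in> h" "(a', b') \<in> h"
  shows "card {c \<in> V. (a, c) \<in> f \<and> (c, b) \<in> g} = card {c \<in> V. (a', c) \<in> f \<and> (c, b') \<in> g}"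
proof -
  have "2 \<le> m"
    using assms(3) by simp
  have part: "partition_on (V \<times> V) G"
    unfolding G using m_scheme_partition_relations[OF assms(2) \<open>2 \<le> m\<close> assms(4)] .
  note color_rel = m_scheme_as_relation_iff[OF assms(2) \<open>2 \<le> m\<close>]
  consider "f = Id_on V" | "g = Id_on V"
    | F H where "F \<in> P 2" "H \<in> P 2" "f = as_relation F" "g = as_relation H"
    using assms(6,7) G by blast
  then show ?thesis
  proof cases
    case 1
    then show ?thesis
      using card_Id_left[OF part assms(7,8)] assms(9,10) by simp
  next
    case 2
    then show ?thesis
      using card_Id_right[OF part assms(6,8)] assms(9,10) by simp
  next
    case fg: 3
    consider "h = Id_on V" | K where "K \<in> P 2" "h = as_relation K"
      using assms(8) G by blast
    then show ?thesis
    proof cases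
      case 1
      then have "b = a" "b' = a'" "a \<in> V" "a' \<in> V"
        using assms(9,10) by auto
      then show ?thesis
        using card_closed_walks_constant[OF assms(2) \<open>2 \<le> m\<close> assms(4) fg(1,2) \<open>a \<in> V\<close> \<open>a' \<in> V\<close>] fg(3,4)
        by simp
    next
      case 2
      then have "[a, b] \<in> K" "[a', b'] \<in> K"
        using assms(9,10) color_rel by auto
      then have same: "same_color (P 2) [a, b] [a', b']"
        using \<open>K \<in> P 2\<close> by (auto simp: same_color_def)
      show ?thesis
        using card_paths_constant[OF assms(1-3) fg(1,2) same] fg(3,4) color_rel[OF fg(1)] color_rel[OF fg(2)]
        by simp
    qed
  qed
qed

theorem lemma2p3:
  fixes V :: "'a set" and P :: "nat \<Rightarrow> 'a list set set"
  assumes "finite V"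
    and "m_scheme V 3 P"
    and "homogeneous P"
  shows "association_scheme V (as_relation ` P 2 \<union> {Id_on V})"
proof -
  define G where "G = as_relation ` P 2 \<union> {Id_on V}"
  have "partition_on (V \<times> V) G"
    unfolding G_def using m_scheme_partition_relations[OF assms(2) _ assms(3)] by simp
  moreover have "Id_on V \<in> G"
    by (simp add: G_def)
  moreover have "g\<inverse> \<in> G" if "g \<in> G" for g
    using that m_scheme_converse[OF assms(2)] by (auto simp: G_def)
  moreover note intersection_number_invariant[OF assms(1,2) order.refl assms(3) G_def]
  ultimately show ?thesis
    unfolding association_scheme_def G_def[symmetric] using assms(1) by blast
qed

end
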